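(* Let $\mathbb{F}$ be an algebraically closed field with $\mathrm{char}\,\mathbb{F}=2$, and let $\mathcal{A}$ be a (not necessarily unital) subalgebra of $\mathbf{O}$ with $\mathcal{A}\subseteq\mathbf{O}_0$ and $\dim\mathcal{A}\ge2$. Then there exists $g\in{\rm G}_2$ such that either (a) $\{1_{\mathbf{O}},\mathbf{u}_1\}\subseteq g\mathcal{A}$; or (b) $\{\mathbf{u}_1,\mathbf{v}_2\}\subseteq g\mathcal{A}$ and $1_{\mathbf{O}}\notin g\mathcal{A}$.
   Context: The split octonion algebra $\mathbf{O}$ is the 8-dimensional $\mathbb{F}$-vector space of formal matrices $a=\begin{pmatrix}\alpha&\mathbf{u}\\ \mathbf{v}&\beta\end{pmatrix}$ with $\alpha,\beta\in\mathbb{F}$, $\mathbf{u},\mathbf{v}\in\mathbb{F}^3$, with multiplication $\begin{pmatrix}\alpha&\mathbf{u}\\ \mathbf{v}&\beta\end{pmatrix}\begin{pmatrix}\alpha'&\mathbf{u}'\\ \mathbf{v}'&\beta'\end{pmatrix}=\begin{pmatrix}\alpha\alpha'+\mathbf{u}\cdot\mathbf{v}'&\alpha\mathbf{u}'+\beta'\mathbf{u}-\mathbf{v}\times\mathbf{v}'\\ \alpha'\mathbf{v}+\beta\mathbf{v}'+\mathbf{u}\times\mathbf{u}'&\beta\beta'+\mathbf{v}\cdot\mathbf{u}'\end{pmatrix}$ (dot product and cross product on $\mathbb{F}^3$). Trace $\mathrm{tr}(a)=\alpha+\beta$, $\mathbf{O}_0=\{a\in\mathbf{O}\mid\mathrm{tr}(a)=0\}$.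 With $\mathbf{c}_1,\mathbf{c}_2,\mathbf{c}_3$ the standard basis of $\mathbb{F}^3$: $\mathbf{u}_i$ has $\mathbf{u}=\mathbf{c}_i$ and all else $0$, $\mathbf{v}_i$ has $\mathbf{v}=\mathbf{c}_i$ and all else $0$, and $1_{\mathbf{O}}$ has $\alpha=\beta=1$, $\mathbf{u}=\mathbf{v}=0$. ${\rm G}_2=\mathrm{Aut}(\mathbf{O})$. *)

theory Defs
  imports "HOL-Computational_Algebra.Polynomial"
begin

datatype 'a vec3 = V3 'a 'a 'a

fun v3add :: "'a::field vec3 \<Rightarrow> 'a vec3 \<Rightarrow> 'a vec3" where
  "v3add (V3 a b c) (V3 x y z) = V3 (a + x) (b + y) (c + z)"

fun v3scale :: "'a::field \<Rightarrow> 'a vec3 \<Rightarrow> 'a vec3" where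
  "v3scale s (V3 x y z) = V3 (s * x) (s * y) (s * z)"

fun v3neg :: "'a::field vec3 \<Rightarrow> 'a vec3" where
  "v3neg (V3 x y z) = V3 (- x) (- y) (- z)"

fun dot3 :: "'a::field vec3 \<Rightarrow> 'a vec3 \<Rightarrow> 'a" where
  "dot3 (V3 a b c) (V3 x y z) = a * x + b * y + c * z"

fun cross3 :: "'a::field vec3 \<Rightarrow> 'a vec3 \<Rightarrow> 'a vec3" where
  "cross3 (V3 a b c) (V3 x y z) = V3 (b * z - c * y) (c * x - a * z) (a * y - b * x)"

definition zero3 :: "'a::field vec3" where "zero3 = V3 0 0 0"

text \<open>Split octonions: formal matrices (alpha, u; v, beta).\<close>
datatype 'a oct = Oct (oalpha: 'a) (ou: "'a vec3") (ov: "'a vec3") (obeta: 'a)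

fun oadd :: "'a::field oct \<Rightarrow> 'a oct \<Rightarrow> 'a oct" where
  "oadd (Oct a u v b) (Oct a' u' v' b') = Oct (a + a') (v3add u u') (v3add v v') (b + b')"

fun oscale :: "'a::field \<Rightarrow> 'a oct \<Rightarrow> 'a oct" where
  "oscale s (Oct a u v b) = Oct (s * a) (v3scale s u) (v3scale s v) (s * b)"

definition ozero :: "'a::field oct" where "ozero = Oct 0 zero3 zero3 0"

fun omult :: "'a::field oct \<Rightarrow> 'a oct \<Rightarrow> 'a oct" where
  "omult (Oct a u v b) (Oct a' u' v' b') =
     Oct (a * a' + dot3 u v')
         (v3add (v3add (v3scale a u') (v3scale b' u)) (v3neg (cross3 v v')))
         (v3add (v3add (v3scale a' v) (v3scale b v')) (cross3 u u'))
         (b * b' + dot3 v u')"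

definition otr :: "'a::field oct \<Rightarrow> 'a" where "otr x = oalpha x + obeta x"

definition O0 :: "'a::field oct set" where "O0 = {x. otr x = 0}"

definition one_O :: "'a::field oct" where "one_O = Oct 1 zero3 zero3 1"

definition oc :: "nat \<Rightarrow> 'a::field vec3" where
  "oc i = (if i = 1 then V3 1 0 0 else if i = 2 then V3 0 1 0 else V3 0 0 1)"

definition uvec :: "nat \<Rightarrow> 'a::field oct" where "uvec i = Oct 0 (oc i) zero3 0"
definition vvec :: "nat \<Rightarrow> 'a::field oct" where "vvec i = Oct 0 zero3 (oc i) 0"

definition subalgebra :: "'a::field oct set \<Rightarrow> bool" where
  "subalgebra A \<longleftrightarrow> ozero \<in> A \<and>
     (\<forall>x\<in>A. \<forall>y\<in>A. oadd x y \<in> A) \<and>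
     (\<forall>s. \<forall>x\<in>A. oscale s x \<in> A) \<and>
     (\<forall>x\<in>A. \<forall>y\<in>A. omult x y \<in> A)"

definition dim_ge2 :: "'a::field oct set \<Rightarrow> bool" where
  "dim_ge2 A \<longleftrightarrow> (\<exists>x\<in>A. \<exists>y\<in>A. \<forall>s t. oadd (oscale s x) (oscale t y) = ozero \<longrightarrow> s = 0 \<and> t = 0)"

definition G2 :: "('a::field oct \<Rightarrow> 'a oct) set" where
  "G2 = {g. bij g \<and> (\<forall>x y. g (oadd x y) = oadd (g x) (g y)) \<and>
            (\<forall>s x. g (oscale s x) = oscale s (g x)) \<and>
            (\<forall>x y. g (omult x y) = omult (g x) (g y))}"

end

theory Submission
  imports Defs
begin

text \<open>
  Every octonion satisfies x * x = tr(x) x - n(x) 1 with n(alpha, u; v, beta) = alpha beta - u.v.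
  Hence in a subalgebra of O0 without 1 every element is null (n = 0), and if
  1 \<in> A then for z \<in> A outside F 1 the element z + lambda 1 with lambda^2 = -n(z) is
  traceless (char 2) and null. Shears, the swap u <-> v and SL3 acting on (u, v)
  move every nonzero traceless null element to u1. In the non-unital case,
  nullity of w and of u1 + w for a second element w forces the v1-coordinate
  of w to vanish, which produces a nonzero element of span(v2, v3) in A; an
  SL2 fixing u1 moves it to v2.
\<close>

lemma oct_coords_cases:
  obtains a u1 u2 u3 v1 v2 v3 b where "x = Oct a (V3 u1 u2 u3) (V3 v1 v2 v3) b"
  by (metis oct.exhaust vec3.exhaust)

definition onorm :: "'a::field oct \<Rightarrow> 'a" where
  "onorm x = oalpha x * obeta x - dot3 (ou x) (ov x)"

lemma omult_one_left [simp]: "omult one_O x = x"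
  by (cases x rule: oct_coords_cases) (simp add: one_O_def zero3_def)

lemma omult_one_right [simp]: "omult x one_O = x"
  by (cases x rule: oct_coords_cases) (simp add: one_O_def zero3_def)

lemma oscale_ozero [simp]: "oscale c ozero = ozero"
  by (simp add: ozero_def zero3_def)

lemma oscale_zero [simp]: "oscale 0 x = ozero"
  by (cases x rule: oct_coords_cases) (simp add: ozero_def zero3_def)

lemma oadd_ozero_left [simp]: "oadd ozero x = x"
  by (cases x rule: oct_coords_cases) (simp add: ozero_def zero3_def)

lemma oct_cayley_hamilton:
  "omult x x = oadd (oscale (otr x) x) (oscale (- onorm x) one_O)"
  by (cases x rule: oct_coords_cases)
     (simp add: otr_def onorm_def one_O_def zero3_def algebra_simps)

lemma omult_self_traceless:
  "otr x = 0 \<Longrightarrow> omult x x = oscale (- onorm x) one_O"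
  using oct_cayley_hamilton[of x] by simp

lemma obeta_traceless: "otr x = 0 \<Longrightarrow> obeta x = - oalpha x"
  by (simp add: otr_def eq_neg_iff_add_eq_0 add.commute)

lemma otr_eq_0_if_subset_O0: "A \<subseteq> O0 \<Longrightarrow> x \<in> A \<Longrightarrow> otr x = 0"
  by (auto simp: O0_def)

lemma otr_add_scalar: "otr (oadd x (oscale c one_O)) = otr x + 2 * c"
  by (cases x rule: oct_coords_cases) (simp add: otr_def one_O_def zero3_def)

lemma onorm_add_scalar:
  "onorm (oadd x (oscale c one_O)) = onorm x + c * otr x + c ^ 2"
  by (cases x rule: oct_coords_cases)
     (simp add: otr_def onorm_def one_O_def zero3_def algebra_simps power2_eq_square)

lemma oct_combination_one:
  assumes "oadd (oscale p y) (oscale q one_O) = oadd (oscale p' y) (oscale q' one_O)" and "p \<noteq> p'"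
  shows "y = oscale ((q' - q) / (p - p')) one_O"
proof (cases y rule: oct_coords_cases)
  case (1 a u1 u2 u3 v1 v2 v3 b)
  with assms have "(p - p') * a = q' - q" "(p - p') * b = q' - q"
    "(p - p') * u1 = 0" "(p - p') * u2 = 0" "(p - p') * u3 = 0"
    "(p - p') * v1 = 0" "(p - p') * v2 = 0" "(p - p') * v3 = 0"
    by (simp_all add: one_O_def zero3_def algebra_simps)
  with 1 \<open>p \<noteq> p'\<close> show ?thesis
    by (simp add: one_O_def zero3_def field_simps)
qed

lemma subalgebraD:
  assumes "subalgebra A" and "x \<in> A" and "y \<in> A"
  shows "oadd x y \<in> A" and "oscale s x \<in> A" and "omult x y \<in> A"
  using assms unfolding subalgebra_def by blast+

lemma G2I:
  assumes "\<And>x y. g (oadd x y) = oadd (g x) (g y)"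
    and "\<And>s x. g (oscale s x) = oscale s (g x)"
    and "\<And>x y. g (omult x y) = omult (g x) (g y)"
    and "\<And>x. h (g x) = x" and "\<And>x. g (h x) = x"
  shows "g \<in> G2"
proof -
  have "bij g"
    by (rule o_bij[of h]) (simp_all add: fun_eq_iff assms(4,5))
  with assms(1-3) show ?thesis unfolding G2_def by simp
qed

lemma G2_oadd: "g \<in> G2 \<Longrightarrow> g (oadd x y) = oadd (g x) (g y)"
  and G2_oscale: "g \<in> G2 \<Longrightarrow> g (oscale s x) = oscale s (g x)"
  and G2_omult: "g \<in> G2 \<Longrightarrow> g (omult x y) = omult (g x) (g y)"
  and G2_bij: "g \<in> G2 \<Longrightarrow> bij g"
  by (simp_all add: G2_def)

lemma G2_inj: "g \<in> G2 \<Longrightarrow> inj g"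
  by (simp add: G2_bij bij_is_inj)

lemma G2_comp: "f \<in> G2 \<Longrightarrow> g \<in> G2 \<Longrightarrow> f \<circ> g \<in> G2"
  by (simp add: G2_def bij_comp)

lemma G2_ozero: "g \<in> G2 \<Longrightarrow> g ozero = ozero"
  using G2_oscale[of g 0 ozero] by simp

lemma G2_one: assumes "g \<in> G2" shows "g one_O = one_O"
proof -
  obtain x where x: "g x = one_O"
    using G2_bij[OF assms] by (metis bij_pointE)
  have "g one_O = omult (g one_O) (g x)" by (simp add: x)
  also have "\<dots> = g (omult one_O x)" by (simp only: G2_omult[OF assms])
  finally show ?thesis by (simp add: x)
qed

lemma G2_otr: assumes g: "g \<in> G2" shows "otr (g x) = otr x"
proof (rule ccontr)
  \<comment> \<open>Apply g to Cayley-Hamilton for x and compare with Cayley-Hamilton for g x: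
    unequal traces would make g x, hence x, a scalar.\<close>
  assume ne: "otr (g x) \<noteq> otr x"
  have "oadd (oscale (otr x) (g x)) (oscale (- onorm x) one_O) = g (omult x x)"
    by (subst oct_cayley_hamilton) (simp add: G2_oadd G2_oscale G2_one g)
  also have "\<dots> = omult (g x) (g x)" by (simp add: G2_omult g)
  also have "\<dots> = oadd (oscale (otr (g x)) (g x)) (oscale (- onorm (g x)) one_O)"
    by (rule oct_cayley_hamilton)
  finally have "g x = oscale ((- onorm (g x) - - onorm x) / (otr x - otr (g x))) one_O"
    by (rule oct_combination_one) (use ne in simp)
  then obtain c where "g x = oscale c one_O" ..
  also have "\<dots> = g (oscale c one_O)" by (simp add: G2_oscale G2_one g)
  finally have "x = oscale c one_O" using G2_inj[OF g] by (simp add: inj_eq)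
  with \<open>g x = oscale c one_O\<close> ne show False by simp
qed

lemma G2_one_in_image_iff: "g \<in> G2 \<Longrightarrow> one_O \<in> g ` A \<longleftrightarrow> one_O \<in> A"
  by (metis G2_inj G2_one inj_image_mem_iff)

lemma G2_image_O0: "g \<in> G2 \<Longrightarrow> A \<subseteq> O0 \<Longrightarrow> g ` A \<subseteq> O0"
  by (auto simp: O0_def G2_otr)

lemma G2_image_subalgebra:
  assumes g: "g \<in> G2" and A: "subalgebra A" shows "subalgebra (g ` A)"
  unfolding subalgebra_def
proof (intro conjI ballI allI)
  show "ozero \<in> g ` A"
    using A G2_ozero[OF g] unfolding subalgebra_def by force
next
  fix x y s assume "x \<in> g ` A" "y \<in> g ` A"
  then obtain a b where ab: "a \<in> A" "b \<in> A" "x = g a" "y = g b" by blast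
  with A have "oadd a b \<in> A" "oscale s a \<in> A" "omult a b \<in> A"
    by (simp_all add: subalgebraD)
  then show "oadd x y \<in> g ` A" "oscale s x \<in> g ` A" "omult x y \<in> g ` A"
    by (simp_all add: ab G2_oadd[OF g, symmetric] G2_oscale[OF g, symmetric]
        G2_omult[OF g, symmetric])
qed

fun oct_shear :: "'a::field vec3 \<Rightarrow> 'a oct \<Rightarrow> 'a oct" where
  "oct_shear a (Oct al u v be) = Oct (al - dot3 a v)
     (v3add (v3add u (v3scale (al - be) a)) (v3neg (v3scale (dot3 a v) a)))
     (v3add v (cross3 a u)) (be + dot3 a v)"

lemma oct_shear_G2: "oct_shear a \<in> G2"
proof (rule G2I[where h = "oct_shear (v3neg a)"])
  fix x y :: "'a oct" and s :: 'a
  obtain a1 a2 a3 where a: "a = V3 a1 a2 a3" by (cases a)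
  obtain p u1 u2 u3 v1 v2 v3 q where x: "x = Oct p (V3 u1 u2 u3) (V3 v1 v2 v3) q"
    by (rule oct_coords_cases)
  obtain p' u1' u2' u3' v1' v2' v3' q' where y: "y = Oct p' (V3 u1' u2' u3') (V3 v1' v2' v3') q'"
    by (rule oct_coords_cases)
  show "oct_shear a (oadd x y) = oadd (oct_shear a x) (oct_shear a y)"
    and "oct_shear a (oscale s x) = oscale s (oct_shear a x)"
    and "oct_shear a (omult x y) = omult (oct_shear a x) (oct_shear a y)"
    and "oct_shear (v3neg a) (oct_shear a x) = x"
    and "oct_shear a (oct_shear (v3neg a) x) = x"
    by (simp_all add: a x y algebra_simps)
qed

fun oct_swap :: "'a::field oct \<Rightarrow> 'a oct" where
  "oct_swap (Oct al u v be) = Oct be (v3neg v) (v3neg u) al"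

lemma oct_swap_G2: "oct_swap \<in> G2"
proof (rule G2I[where h = oct_swap])
  fix x y :: "'a oct" and s :: 'a
  obtain p u1 u2 u3 v1 v2 v3 q where x: "x = Oct p (V3 u1 u2 u3) (V3 v1 v2 v3) q"
    by (rule oct_coords_cases)
  obtain p' u1' u2' u3' v1' v2' v3' q' where y: "y = Oct p' (V3 u1' u2' u3') (V3 v1' v2' v3') q'"
    by (rule oct_coords_cases)
  show "oct_swap (oadd x y) = oadd (oct_swap x) (oct_swap y)"
    and "oct_swap (oscale s x) = oscale s (oct_swap x)"
    and "oct_swap (omult x y) = omult (oct_swap x) (oct_swap y)"
    and "oct_swap (oct_swap x) = x" and "oct_swap (oct_swap x) = x"
    by (simp_all add: x y algebra_simps)
qed

fun mat_vec :: "'a::field vec3 vec3 \<Rightarrow> 'a vec3 \<Rightarrow> 'a vec3" where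
  "mat_vec (V3 r1 r2 r3) u = V3 (dot3 r1 u) (dot3 r2 u) (dot3 r3 u)"

fun cofactor3 :: "'a::field vec3 vec3 \<Rightarrow> 'a vec3 vec3" where
  "cofactor3 (V3 r1 r2 r3) = V3 (cross3 r2 r3) (cross3 r3 r1) (cross3 r1 r2)"

fun transpose3 :: "'a::field vec3 vec3 \<Rightarrow> 'a vec3 vec3" where
  "transpose3 (V3 (V3 a b c) (V3 d e f) (V3 g h i)) = V3 (V3 a d g) (V3 b e h) (V3 c f i)"

fun det3 :: "'a::field vec3 vec3 \<Rightarrow> 'a" where
  "det3 (V3 r1 r2 r3) = dot3 r1 (cross3 r2 r3)"

lemma mat3_cases:
  obtains a b c d e f g h i where "M = V3 (V3 a b c) (V3 d e f) (V3 g h i)"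
  by (metis vec3.exhaust)

text \<open>
  M acts on u and its cofactor matrix, the inverse transpose of M when det3 M = 1,
  on v; cross products transform under M by the cofactor matrix, which makes the
  action multiplicative.
\<close>

fun oct_SL3_act :: "'a::field vec3 vec3 \<Rightarrow> 'a oct \<Rightarrow> 'a oct" where
  "oct_SL3_act M (Oct al u v be) = Oct al (mat_vec M u) (mat_vec (cofactor3 M) v) be"

lemma oct_SL3_act_G2:
  assumes "det3 M = 1" shows "oct_SL3_act M \<in> G2"
proof (rule G2I[where h = "oct_SL3_act (transpose3 (cofactor3 M))"])
  fix x y :: "'a oct" and s :: 'a
  obtain m11 m12 m13 m21 m22 m23 m31 m32 m33
    where M: "M = V3 (V3 m11 m12 m13) (V3 m21 m22 m23) (V3 m31 m32 m33)"
    by (rule mat3_cases)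
  obtain p u1 u2 u3 v1 v2 v3 q where x: "x = Oct p (V3 u1 u2 u3) (V3 v1 v2 v3) q"
    by (rule oct_coords_cases)
  obtain p' u1' u2' u3' v1' v2' v3' q' where y: "y = Oct p' (V3 u1' u2' u3') (V3 v1' v2' v3') q'"
    by (rule oct_coords_cases)
  have det: "m11 * (m22 * m33 - m23 * m32) + m12 * (m23 * m31 - m21 * m33)
      + m13 * (m21 * m32 - m22 * m31) = 1"
    using assms by (simp add: M)
  show "oct_SL3_act M (oadd x y) = oadd (oct_SL3_act M x) (oct_SL3_act M y)"
    and "oct_SL3_act M (oscale s x) = oscale s (oct_SL3_act M x)"
    by (simp_all add: M x y algebra_simps)
  show "oct_SL3_act M (omult x y) = omult (oct_SL3_act M x) (oct_SL3_act M y)"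
    using det by (simp add: M x y) algebra
  show "oct_SL3_act (transpose3 (cofactor3 M)) (oct_SL3_act M x) = x"
    and "oct_SL3_act M (oct_SL3_act (transpose3 (cofactor3 M)) x) = x"
    using det by (simp_all add: M x) algebra+
qed

lemma dot3_mat_vec_cofactor3:
  "dot3 (mat_vec M u) (mat_vec (cofactor3 M) v) = det3 M * dot3 u v"
  by (cases M rule: mat3_cases, cases u, cases v) (simp add: algebra_simps)

lemma SL3_maps_to_c1:
  assumes "u \<noteq> (zero3 :: 'a::field vec3)"
  shows "\<exists>M. det3 M = 1 \<and> mat_vec M u = V3 1 0 0"
proof -
  obtain u1 u2 u3 where u: "u = V3 u1 u2 u3" by (cases u)
  consider "u1 \<noteq> 0" | "u1 = 0" "u2 \<noteq> 0" | "u1 = 0" "u2 = 0" "u3 \<noteq> 0"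
    using assms by (auto simp: u zero3_def)
  then show ?thesis
  proof cases
    case 1
    show ?thesis
      by (rule exI[of _ "V3 (V3 (1/u1) 0 0) (V3 (-u2/u1) 1 0) (V3 (-u3) 0 u1)"])
         (use 1 in \<open>simp add: u field_simps\<close>)
  next
    case 2
    show ?thesis
      by (rule exI[of _ "V3 (V3 0 (1/u2) 0) (V3 1 0 0) (V3 0 u3 (-u2))"])
         (use 2 in \<open>simp add: u field_simps\<close>)
  next
    case 3
    show ?thesis
      by (rule exI[of _ "V3 (V3 0 0 (1/u3)) (V3 u3 0 0) (V3 0 1 0)"])
         (use 3 in \<open>simp add: u field_simps\<close>)
  qed
qed

lemma dot3_eq_solvable:
  assumes "v \<noteq> (zero3 :: 'a::field vec3)"
  shows "\<exists>a. dot3 a v = c"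
proof -
  obtain v1 v2 v3 where v: "v = V3 v1 v2 v3" by (cases v)
  consider "v1 \<noteq> 0" | "v2 \<noteq> 0" | "v3 \<noteq> 0"
    using assms by (auto simp: v zero3_def)
  then show ?thesis
  proof cases
    case 1 then show ?thesis by (intro exI[of _ "V3 (c/v1) 0 0"]) (simp add: v)
  next
    case 2 then show ?thesis by (intro exI[of _ "V3 0 (c/v2) 0"]) (simp add: v)
  next
    case 3 then show ?thesis by (intro exI[of _ "V3 0 0 (c/v3)"]) (simp add: v)
  qed
qed

lemma G2_conj_to_u1_of_u_nonzero:
  assumes "u \<noteq> zero3" and "dot3 u v = 0"
  shows "\<exists>g\<in>G2. g (Oct 0 u v 0) = (uvec 1 :: 'a::field oct)"
proof -
  obtain M where M: "det3 M = 1" "mat_vec M u = V3 1 0 0"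
    using SL3_maps_to_c1[OF assms(1)] by blast
  obtain w1 w2 w3 where w: "mat_vec (cofactor3 M) v = V3 w1 w2 w3" by (cases "mat_vec (cofactor3 M) v")
  have "w1 = 0"
    using dot3_mat_vec_cofactor3[of M u v] assms(2) by (simp add: M w)
  then have "oct_shear (V3 0 w3 (-w2)) (oct_SL3_act M (Oct 0 u v 0)) = uvec 1"
    by (simp add: M w uvec_def oc_def zero3_def)
  moreover have "oct_shear (V3 0 w3 (-w2)) \<circ> oct_SL3_act M \<in> G2"
    by (simp add: G2_comp oct_SL3_act_G2 oct_shear_G2 M(1))
  ultimately show ?thesis by (metis comp_apply)
qed

lemma G2_conj_to_u1_of_alpha_zero:
  assumes "Oct 0 u v 0 \<noteq> ozero" and "dot3 u v = 0"
  shows "\<exists>g\<in>G2. g (Oct 0 u v 0) = (uvec 1 :: 'a::field oct)"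
proof (cases "u = zero3")
  case False
  then show ?thesis using G2_conj_to_u1_of_u_nonzero assms(2) by blast
next
  case True
  have "v3neg v \<noteq> zero3" "dot3 (v3neg v) zero3 = 0"
    using True assms(1) by (cases v, auto simp: ozero_def zero3_def)+
  then obtain g where g: "g \<in> G2" "g (Oct 0 (v3neg v) zero3 0) = uvec 1"
    using G2_conj_to_u1_of_u_nonzero by blast
  have "oct_swap (Oct 0 u v 0) = Oct 0 (v3neg v) zero3 0"
    using True by (simp add: zero3_def)
  with g show ?thesis
    using G2_comp[OF g(1) oct_swap_G2] by (metis comp_apply)
qed

text \<open>
  A shear with dot3 a v = alpha kills the diagonal of x; the new pair (u', v') is
  isotropic because u'.v' = u.v + alpha^2 = - onorm x.
\<close>

lemma G2_conj_to_u1: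
  assumes "x \<noteq> ozero" and "otr x = 0" and "onorm x = 0"
  shows "\<exists>g\<in>G2. g x = (uvec 1 :: 'a::field oct)"
proof -
  obtain al u1 u2 u3 v1 v2 v3 be where x: "x = Oct al (V3 u1 u2 u3) (V3 v1 v2 v3) be"
    by (rule oct_coords_cases)
  have be: "be = - al" using obeta_traceless[OF assms(2)] by (simp add: x)
  have uv: "u1 * v1 + u2 * v2 + u3 * v3 = - (al * al)"
    using assms(3) by (simp add: x be onorm_def)
  show ?thesis
  proof (cases "al = 0")
    case True
    then show ?thesis
      using G2_conj_to_u1_of_alpha_zero[of "V3 u1 u2 u3" "V3 v1 v2 v3"] assms(1) uv
      by (simp add: x be)
  next
    case False
    then have "V3 v1 v2 v3 \<noteq> zero3" using uv by (auto simp: zero3_def)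
    then obtain a where "dot3 a (V3 v1 v2 v3) = al"
      using dot3_eq_solvable by blast
    moreover obtain a1 a2 a3 where "a = V3 a1 a2 a3" by (cases a)
    ultimately have a: "a1 * v1 + a2 * v2 + a3 * v3 = al" by simp
    define y where "y = oct_shear (V3 a1 a2 a3) x"
    define u' where "u' = V3 (u1 + al * a1) (u2 + al * a2) (u3 + al * a3)"
    define v' where "v' = V3 (v1 + (a2 * u3 - a3 * u2)) (v2 + (a3 * u1 - a1 * u3))
      (v3 + (a1 * u2 - a2 * u1))"
    have y: "y = Oct 0 u' v' 0"
      using a by (simp add: y_def u'_def v'_def x be algebra_simps)
    have "dot3 u' v' = (u1 * v1 + u2 * v2 + u3 * v3) + al * (a1 * v1 + a2 * v2 + a3 * v3)"
      unfolding u'_def v'_def dot3.simps by algebra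
    then have "dot3 u' v' = 0" using a uv by simp
    moreover have "y \<noteq> ozero"
      using assms(1) G2_inj[OF oct_shear_G2] G2_ozero[OF oct_shear_G2]
      unfolding y_def by (metis injD)
    ultimately obtain g where g: "g \<in> G2" "g y = uvec 1"
      using G2_conj_to_u1_of_alpha_zero[of u' v'] y by auto
    show ?thesis
    proof
      show "g \<circ> oct_shear (V3 a1 a2 a3) \<in> G2" by (rule G2_comp[OF g(1) oct_shear_G2])
      show "(g \<circ> oct_shear (V3 a1 a2 a3)) x = uvec 1" using g(2) by (simp add: y_def)
    qed
  qed
qed

lemma onorm_eq_0_if_one_notin:
  assumes B: "subalgebra B" and "one_O \<notin> B" and "x \<in> B" and "otr x = 0"
  shows "onorm x = 0"
proof (rule ccontr)
  assume n: "onorm x \<noteq> 0"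
  have "oscale (- 1 / onorm x) (omult x x) \<in> B"
    by (meson subalgebraD B \<open>x \<in> B\<close>)
  also have "oscale (- 1 / onorm x) (omult x x) = one_O"
    using n by (simp add: omult_self_traceless \<open>otr x = 0\<close> one_O_def zero3_def)
  finally show False using \<open>one_O \<notin> B\<close> by simp
qed

lemma nonunital_contains_v23:
  assumes B: "subalgebra B" and "B \<subseteq> O0" and "one_O \<notin> B"
    and "uvec 1 \<in> B" and "w \<in> B" and w_indep: "\<forall>c. w \<noteq> oscale c (uvec 1)"
  shows "\<exists>q2 q3. (q2 \<noteq> 0 \<or> q3 \<noteq> 0) \<and> Oct 0 zero3 (V3 0 q2 q3) 0 \<in> B"
proof -
  have null: "onorm x = 0" if "x \<in> B" for x
    using onorm_eq_0_if_one_notin[OF B \<open>one_O \<notin> B\<close> that]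
      otr_eq_0_if_subset_O0[OF \<open>B \<subseteq> O0\<close> that] .
  obtain al u1 u2 u3 v1 v2 v3 be where w: "w = Oct al (V3 u1 u2 u3) (V3 v1 v2 v3) be"
    by (rule oct_coords_cases)
  have be: "be = - al"
    using obeta_traceless[OF otr_eq_0_if_subset_O0[OF \<open>B \<subseteq> O0\<close> \<open>w \<in> B\<close>]] by (simp add: w)
  have "onorm w = 0" by (rule null[OF \<open>w \<in> B\<close>])
  then have nw: "al * al + (u1 * v1 + u2 * v2 + u3 * v3) = 0"
    by (simp add: w be onorm_def) (simp add: neg_eq_iff_add_eq_0 add.assoc)
  have "onorm (oadd (uvec 1) w) = onorm w - v1"
    by (simp add: w onorm_def uvec_def oc_def zero3_def algebra_simps)
  moreover have "onorm (oadd (uvec 1) w) = 0"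
    by (rule null) (rule subalgebraD[OF B \<open>uvec 1 \<in> B\<close> \<open>w \<in> B\<close>])
  ultimately have "v1 = 0" using \<open>onorm w = 0\<close> by simp
  show ?thesis
  proof (cases "u2 \<noteq> 0 \<or> u3 \<noteq> 0")
    case True
    have "oadd (omult (uvec 1) w) (oscale (- be) (uvec 1)) \<in> B"
      by (meson subalgebraD B \<open>uvec 1 \<in> B\<close> \<open>w \<in> B\<close>)
    also have "oadd (omult (uvec 1) w) (oscale (- be) (uvec 1)) = Oct 0 zero3 (V3 0 (- u3) u2) 0"
      using \<open>v1 = 0\<close> by (simp add: w uvec_def oc_def zero3_def)
    finally show ?thesis using True by (intro exI[of _ "- u3"] exI[of _ u2]) auto
  next
    case False
    then have "al = 0" using nw \<open>v1 = 0\<close> by simp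
    have "oadd w (oscale (- u1) (uvec 1)) \<in> B"
      by (meson subalgebraD B \<open>uvec 1 \<in> B\<close> \<open>w \<in> B\<close>)
    also have "oadd w (oscale (- u1) (uvec 1)) = Oct 0 zero3 (V3 0 v2 v3) 0"
      using \<open>v1 = 0\<close> \<open>al = 0\<close> False by (simp add: w be uvec_def oc_def zero3_def)
    finally have "Oct 0 zero3 (V3 0 v2 v3) 0 \<in> B" .
    moreover have "v2 \<noteq> 0 \<or> v3 \<noteq> 0"
      using w_indep \<open>v1 = 0\<close> \<open>al = 0\<close> False
      by (auto simp: w be uvec_def oc_def zero3_def)
    ultimately show ?thesis by blast
  qed
qed

lemma G2_fix_u1_move_to_v2:
  assumes "q2 \<noteq> 0 \<or> q3 \<noteq> 0"
  shows "\<exists>g\<in>G2. g (uvec 1) = uvec 1 \<and> g (Oct 0 zero3 (V3 0 q2 q3) 0) = (vvec 2 :: 'a::field oct)"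
proof -
  have "\<exists>a b c d :: 'a. a * d - b * c = 1 \<and> d * q2 - c * q3 = 1 \<and> a * q3 - b * q2 = 0"
  proof (cases "q2 = 0")
    case False
    then show ?thesis
      by (intro exI[of _ q2] exI[of _ q3] exI[of _ 0] exI[of _ "1/q2"]) (simp add: field_simps)
  next
    case True
    with assms have "q3 \<noteq> 0" by simp
    with True show ?thesis
      by (intro exI[of _ 0] exI[of _ q3] exI[of _ "-1/q3"] exI[of _ 0]) (simp add: field_simps)
  qed
  then obtain a b c d where abcd: "a * d - b * c = 1" "d * q2 - c * q3 = 1" "a * q3 - b * q2 = 0"
    by blast
  let ?M = "V3 (V3 1 0 0) (V3 0 a b) (V3 0 c d)"
  have "det3 ?M = 1" using abcd by (simp add: algebra_simps)
  moreover have "oct_SL3_act ?M (uvec 1) = uvec 1"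
    by (simp add: uvec_def oc_def zero3_def)
  moreover have "oct_SL3_act ?M (Oct 0 zero3 (V3 0 q2 q3) 0) = vvec 2"
    using abcd by (simp add: vvec_def oc_def zero3_def algebra_simps)
  ultimately show ?thesis using oct_SL3_act_G2 by blast
qed

lemma dim_ge2_not_multiple:
  assumes "dim_ge2 A" shows "\<exists>z\<in>A. \<forall>c. z \<noteq> oscale c w"
proof (rule ccontr)
  assume "\<not> ?thesis"
  moreover obtain x y where "x \<in> A" "y \<in> A"
    and indep: "\<And>s t. oadd (oscale s x) (oscale t y) = ozero \<Longrightarrow> s = 0 \<and> t = 0"
    using assms unfolding dim_ge2_def by blast
  ultimately obtain c d where x: "x = oscale c w" and y: "y = oscale d w" by blast
  have "oadd (oscale d x) (oscale (- c) y) = ozero"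
    by (cases w rule: oct_coords_cases) (simp add: x y ozero_def zero3_def algebra_simps)
  from indep[OF this] have "c = 0" by simp
  then have "x = ozero" by (simp add: x)
  then have "oadd (oscale 1 x) (oscale 0 y) = ozero"
    by (cases y rule: oct_coords_cases) (simp add: ozero_def zero3_def)
  from indep[OF this] show False by simp
qed

lemma G2_unital_case:
  fixes A :: "'a::alg_closed_field oct set"
  assumes "(2::'a) = 0" and A: "subalgebra A" and "A \<subseteq> O0" and "dim_ge2 A" and "one_O \<in> A"
  shows "\<exists>g\<in>G2. uvec 1 \<in> g ` A"
proof -
  obtain z where "z \<in> A" and z_indep: "\<forall>c. z \<noteq> oscale c one_O"
    using dim_ge2_not_multiple[OF \<open>dim_ge2 A\<close>] by blast
  obtain lam where lam: "lam ^ 2 = - onorm z"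
    using nth_root_exists[of 2] by auto
  define y where "y = oadd z (oscale lam one_O)"
  have "y \<in> A" unfolding y_def by (meson subalgebraD A \<open>z \<in> A\<close> \<open>one_O \<in> A\<close>)
  have "otr z = 0" using otr_eq_0_if_subset_O0 \<open>A \<subseteq> O0\<close> \<open>z \<in> A\<close> .
  then have "otr y = 0" and "onorm y = 0"
    using \<open>(2::'a) = 0\<close> lam by (simp_all add: y_def otr_add_scalar onorm_add_scalar)
  moreover have "y \<noteq> ozero"
  proof
    assume "y = ozero"
    then have "z = oscale (- lam) one_O"
      by (cases z rule: oct_coords_cases)
         (simp add: y_def ozero_def one_O_def zero3_def add_eq_0_iff2)
    with z_indep show False by blast
  qed
  ultimately obtain g where "g \<in> G2" "g y = uvec 1"
    using G2_conj_to_u1 by blast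
  with \<open>y \<in> A\<close> show ?thesis by (metis image_eqI)
qed

lemma G2_nonunital_case:
  fixes A :: "'a::field oct set"
  assumes A: "subalgebra A" and "A \<subseteq> O0" and "dim_ge2 A" and "one_O \<notin> A"
  shows "\<exists>g\<in>G2. uvec 1 \<in> g ` A \<and> vvec 2 \<in> g ` A"
proof -
  obtain z where "z \<in> A" and "z \<noteq> ozero"
    using dim_ge2_not_multiple[OF \<open>dim_ge2 A\<close>, of ozero] by auto
  have "otr z = 0" using otr_eq_0_if_subset_O0 \<open>A \<subseteq> O0\<close> \<open>z \<in> A\<close> .
  then have "onorm z = 0"
    using onorm_eq_0_if_one_notin[OF A \<open>one_O \<notin> A\<close> \<open>z \<in> A\<close>] by blast
  then obtain g1 where g1: "g1 \<in> G2" "g1 z = uvec 1"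
    using G2_conj_to_u1 \<open>z \<noteq> ozero\<close> \<open>otr z = 0\<close> by blast
  obtain y where "y \<in> A" and y_indep: "\<forall>c. y \<noteq> oscale c z"
    using dim_ge2_not_multiple[OF \<open>dim_ge2 A\<close>] by blast
  define B where "B = g1 ` A"
  have B: "subalgebra B" "B \<subseteq> O0" "one_O \<notin> B"
    using G2_image_subalgebra[OF g1(1) A] G2_image_O0[OF g1(1) \<open>A \<subseteq> O0\<close>]
      G2_one_in_image_iff[OF g1(1)] \<open>one_O \<notin> A\<close> by (simp_all add: B_def)
  have "uvec 1 \<in> B" "g1 y \<in> B"
    unfolding B_def using \<open>z \<in> A\<close> \<open>y \<in> A\<close> g1(2) by (metis image_eqI)+
  moreover have "\<forall>c. g1 y \<noteq> oscale c (uvec 1)"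
    using y_indep G2_inj[OF g1(1)] by (metis G2_oscale g1 injD)
  ultimately obtain q2 q3 where "q2 \<noteq> 0 \<or> q3 \<noteq> 0" and q: "Oct 0 zero3 (V3 0 q2 q3) 0 \<in> B"
    using nonunital_contains_v23[OF B] by blast
  then obtain g2 where g2: "g2 \<in> G2" "g2 (uvec 1) = uvec 1"
    "g2 (Oct 0 zero3 (V3 0 q2 q3) 0) = vvec 2"
    using G2_fix_u1_move_to_v2 by blast
  have "uvec 1 \<in> (g2 \<circ> g1) ` A" using \<open>z \<in> A\<close> g1(2) g2(2) by (metis comp_apply image_eqI)
  moreover have "vvec 2 \<in> (g2 \<circ> g1) ` A" using q g2(3) unfolding B_def by (metis image_comp image_eqI)
  ultimately show ?thesis using G2_comp[OF g2(1) g1(1)] by blast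
qed

theorem lemma6p8:
  fixes A :: "'a::alg_closed_field oct set"
  assumes "CHAR('a) = 2"
    and "subalgebra A"
    and "A \<subseteq> O0"
    and "dim_ge2 A"
  shows "\<exists>g\<in>G2. ({one_O, uvec 1} \<subseteq> g ` A) \<or>
                 ({uvec 1, vvec 2} \<subseteq> g ` A \<and> one_O \<notin> g ` A)"
proof (cases "one_O \<in> A")
  case True
  have "(2::'a) = 0" using of_nat_CHAR[where 'a = 'a] assms(1) by simp
  then obtain g where "g \<in> G2" "uvec 1 \<in> g ` A"
    using G2_unital_case assms(2-4) True by blast
  then show ?thesis using G2_one_in_image_iff True by blast
next
  case False
  then obtain g where "g \<in> G2" "uvec 1 \<in> g ` A" "vvec 2 \<in> g ` A"
    using G2_nonunital_case assms(2-4) by blast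
  then show ?thesis using G2_one_in_image_iff False by blast
qed

end
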